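(* Let $q$ be a positive integer, $Z>0$, $\gamma:=(6\pi^2/q)^{2/3}$. For every $\tau\in\mathcal{J}$, $\mathcal{E}_{\mathrm{mTF}}(\tau^* )\le\mathcal{E}_{\mathrm{mTF}}(\tau)$, where $\tau^*$ is the symmetric decreasing rearrangement of $\tau$.
   Context: $\mathcal{J}:=\{\tau\in L^1(\mathbb{R}^3,(1+\xi^2)\mathrm{d}\xi):\tau\ge0\}$, and $\mathcal{E}_{\mathrm{mTF}}(\tau)=\int_{\mathbb{R}^3}\xi^2\tau(\xi)\,\mathrm{d}\xi-\tfrac32\gamma^{-1/2}Z\int_{\mathbb{R}^3}\tau(\xi)^{2/3}\,\mathrm{d}\xi+\tfrac34\gamma^{-1/2}\iint\big(\tau_<(\xi,\xi')\tau_>(\xi,\xi')^{2/3}-\tfrac15\tau_<(\xi,\xi')^{5/3}\big)\mathrm{d}\xi\,\mathrm{d}\xi'$, with $\tau_<=\min\{\tau(\xi),\tau(\xi')\}$, $\tau_>=\max\{\tau(\xi),\tau(\xi')\}$. *)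

theory Defs
  imports "HOL-Analysis.Analysis"
begin

type_synonym R3 = "real ^ 3"

definition J_class :: "(R3 \<Rightarrow> real) set" where
  "J_class = {\<tau>. (\<forall>\<xi>. \<tau> \<xi> \<ge> 0) \<and> integrable lborel (\<lambda>\<xi>. (1 + (norm \<xi>)\<^sup>2) * \<tau> \<xi>)}"

definition sym_rearr_set :: "R3 set \<Rightarrow> R3 set" where
  "sym_rearr_set A =
     (if emeasure lborel A = \<infinity> then UNIV
      else ball 0 (SOME r. r \<ge> 0 \<and> emeasure lborel (ball (0::R3) r) = emeasure lborel A))"

definition sym_dec_rearr :: "(R3 \<Rightarrow> real) \<Rightarrow> (R3 \<Rightarrow> real)" where
  "sym_dec_rearr f = (\<lambda>x. enn2real (\<integral>\<^sup>+ t. indicator {0<..} t *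
       indicator (sym_rearr_set {y. \<bar>f y\<bar> > t}) x \<partial>lborel))"

definition E_mTF :: "real \<Rightarrow> real \<Rightarrow> (R3 \<Rightarrow> real) \<Rightarrow> real" where
  "E_mTF \<gamma> Z \<tau> =
     (\<integral>\<xi>. (norm \<xi>)\<^sup>2 * \<tau> \<xi> \<partial>lborel)
     - 3/2 * \<gamma> powr (-1/2) * Z * (\<integral>\<xi>. \<tau> \<xi> powr (2/3) \<partial>lborel)
     + 3/4 * \<gamma> powr (-1/2) *
       (\<integral>p. (min (\<tau> (fst p)) (\<tau> (snd p)) * max (\<tau> (fst p)) (\<tau> (snd p)) powr (2/3)
              - 1/5 * min (\<tau> (fst p)) (\<tau> (snd p)) powr (5/3)) \<partial>(lborel \<Otimes>\<^sub>M lborel))"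

end

theory Submission
  imports Defs
begin

text \<open>
  The potential term \<open>\<integral> \<tau>\<^bsup>2/3\<^esup>\<close> and the interaction term integrate functions of the
  values of \<open>\<tau>\<close> (at one point, respectively at two points) that vanish at \<open>0\<close>, so they only
  depend on the measures of the level sets \<open>{\<tau> > t}\<close>, \<open>t > 0\<close>. The rearrangement \<open>\<tau>*\<close>
  replaces every such level set by the centred ball of the same measure, so \<open>\<tau>\<close> and \<open>\<tau>*\<close> are
  equimeasurable and these two terms do not change. By the layer-cake formula the kinetic term
  is \<open>\<integral>\<^sub>0\<^sup>\<infinity> \<integral>\<^bsub>{\<tau> > t}\<^esub> |\<xi>|\<^sup>2 d\<xi> dt\<close>, and among all sets of a given finite measure the
  centred ball minimises \<open>\<integral> |\<xi>|\<^sup>2\<close> (bathtub principle), so it can only decrease.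
\<close>

section \<open>Equimeasurable functions\<close>

text \<open>
  Pulling back along \<open>ln\<close> turns the intervals \<open>{a<..b}\<close>, which generate the Borel sets and
  exhaust \<open>\<real>\<close> by sets of finite measure, into differences of level sets of \<open>f\<close>. So the
  distribution of \<open>f\<close> on \<open>{f > 0}\<close> is determined by the measures of its level sets even
  when \<open>{f > 0}\<close> has infinite measure.
\<close>

definition log_distribution :: "'a measure \<Rightarrow> ('a \<Rightarrow> real) \<Rightarrow> real measure" where
  "log_distribution M f =
     distr (density M (indicator {x\<in>space M. 0 < f x})) borel (\<lambda>x. ln (f x))"

lemma sets_log_distribution [simp]: "sets (log_distribution M f) = sets borel"
  by (simp add: log_distribution_def)

lemma emeasure_log_distribution_Ioc:
  assumes [measurable]: "f \<in> borel_measurable M"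
  shows "emeasure (log_distribution M f) {a<..b} =
         emeasure M {x\<in>space M. exp a < f x \<and> f x \<le> exp b}"
proof -
  have "emeasure (log_distribution M f) {a<..b} =
        emeasure (density M (indicator {x\<in>space M. 0 < f x}))
          {x\<in>space M. a < ln (f x) \<and> ln (f x) \<le> b}"
    unfolding log_distribution_def
    by (subst emeasure_distr) (auto simp: vimage_def Int_def conj_commute)
  also have "\<dots> = (\<integral>\<^sup>+x. indicator {x\<in>space M. 0 < f x} x *
                       indicator {x\<in>space M. a < ln (f x) \<and> ln (f x) \<le> b} x \<partial>M)"
    by (rule emeasure_density) auto
  also have "\<dots> = (\<integral>\<^sup>+x. indicator {x\<in>space M. exp a < f x \<and> f x \<le> exp b} x \<partial>M)"
  proof (intro nn_integral_cong)
    have "a < ln y \<and> ln y \<le> b \<longleftrightarrow> exp a < y \<and> y \<le> exp b" if "0 < y" for y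
      using that ln_less_cancel_iff[of "exp a" y] ln_le_cancel_iff[of y "exp b"] by simp
    moreover have "0 < y" if "exp a < y" for y
      using that exp_gt_zero[of a] by linarith
    ultimately show "indicator {x\<in>space M. 0 < f x} x *
          indicator {x\<in>space M. a < ln (f x) \<and> ln (f x) \<le> b} x =
        (indicator {x\<in>space M. exp a < f x \<and> f x \<le> exp b} x :: ennreal)" for x
      by (auto simp: indicator_def)
  qed
  also have "\<dots> = emeasure M {x\<in>space M. exp a < f x \<and> f x \<le> exp b}"
    by (rule nn_integral_indicator) auto
  finally show ?thesis .
qed

lemma emeasure_level_set_diff:
  fixes f :: "'a \<Rightarrow> real"
  assumes [measurable]: "f \<in> borel_measurable M"
    and fin: "emeasure M {x\<in>space M. s < f x} \<noteq> \<infinity>" and "s \<le> t"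
  shows "emeasure M {x\<in>space M. s < f x \<and> f x \<le> t} =
         emeasure M {x\<in>space M. s < f x} - emeasure M {x\<in>space M. t < f x}"
proof -
  have sub: "{x\<in>space M. t < f x} \<subseteq> {x\<in>space M. s < f x}"
    using \<open>s \<le> t\<close> by auto
  then have "emeasure M {x\<in>space M. t < f x} \<le> emeasure M {x\<in>space M. s < f x}"
    by (rule emeasure_mono) measurable
  then have fin_t: "emeasure M {x\<in>space M. t < f x} \<noteq> \<infinity>"
    using fin by (auto simp: top_unique)
  have "{x\<in>space M. s < f x \<and> f x \<le> t} = {x\<in>space M. s < f x} - {x\<in>space M. t < f x}"
    by auto
  then show ?thesis
    using emeasure_Diff[OF fin_t _ _ sub] by simp
qed

definition equimeasurable ::
  "'a measure \<Rightarrow> ('a \<Rightarrow> real) \<Rightarrow> 'b measure \<Rightarrow> ('b \<Rightarrow> real) \<Rightarrow> bool" where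
  "equimeasurable M f N g \<longleftrightarrow>
     (\<forall>t>0. emeasure M {x\<in>space M. t < f x} = emeasure N {y\<in>space N. t < g y})"

lemma log_distribution_eq:
  fixes f :: "'a \<Rightarrow> real" and g :: "'b \<Rightarrow> real"
  assumes [measurable]: "f \<in> borel_measurable M" "g \<in> borel_measurable N"
    and eq: "equimeasurable M f N g"
    and fin: "\<And>t. 0 < t \<Longrightarrow> emeasure M {x\<in>space M. t < f x} \<noteq> \<infinity>"
  shows "log_distribution M f = log_distribution N g"
proof (rule measure_eqI_generator_eq[where \<Omega>=UNIV and E="range (\<lambda>(a, b). {a<..b::real})"
      and A="\<lambda>i. {- real (i::nat)<..real i}"])
  have fin': "emeasure N {y\<in>space N. t < g y} \<noteq> \<infinity>" if "0 < t" for t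
    using eq fin that by (simp add: equimeasurable_def)
  fix X assume "X \<in> range (\<lambda>(a, b). {a<..b::real})"
  then obtain a b where X: "X = {a<..b}"
    by auto
  show "emeasure (log_distribution M f) X = emeasure (log_distribution N g) X"
  proof (cases "a \<le> b")
    case True
    then have "exp a \<le> exp b"
      by simp
    then show ?thesis
      using eq unfolding X emeasure_log_distribution_Ioc[OF assms(1)]
        emeasure_log_distribution_Ioc[OF assms(2)]
      by (simp add: emeasure_level_set_diff[OF assms(1) fin]
          emeasure_level_set_diff[OF assms(2) fin'] equimeasurable_def)
  next
    case False
    then show ?thesis
      unfolding X by simp
  qed
next
  fix i :: nat
  have "emeasure (log_distribution M f) {- real i<..real i} \<le>
        emeasure M {x\<in>space M. exp (- real i) < f x}"
    unfolding emeasure_log_distribution_Ioc[OF assms(1)] by (intro emeasure_mono) auto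
  then show "emeasure (log_distribution M f) {- real i<..real i} \<noteq> \<infinity>"
    using fin[of "exp (- real i)"] by (auto simp: top_unique)
next
  have "x \<in> (\<Union>i::nat. {- real i<..real i})" for x :: real
  proof -
    obtain i :: nat where "\<bar>x\<bar> < real i"
      using reals_Archimedean2 by blast
    then show ?thesis
      by (intro UN_I[of i]) auto
  qed
  then show "(\<Union>i. {- real (i::nat)<..real i}) = UNIV"
    by blast
qed (auto simp: borel_sigma_sets_Ioc Int_stable_def)

lemma nn_integral_log_distribution:
  fixes f :: "'a \<Rightarrow> real" and G :: "real \<Rightarrow> ennreal"
  assumes [measurable]: "f \<in> borel_measurable M" "G \<in> borel_measurable borel"
    and "G 0 = 0" and "\<And>x. x \<in> space M \<Longrightarrow> 0 \<le> f x"
  shows "(\<integral>\<^sup>+x. G (f x) \<partial>M) = (\<integral>\<^sup>+u. G (exp u) \<partial>log_distribution M f)"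
proof -
  have "(\<integral>\<^sup>+u. G (exp u) \<partial>log_distribution M f) =
        (\<integral>\<^sup>+x. indicator {x\<in>space M. 0 < f x} x * G (exp (ln (f x))) \<partial>M)"
    unfolding log_distribution_def by (simp add: nn_integral_distr nn_integral_density)
  also have "\<dots> = (\<integral>\<^sup>+x. G (f x) \<partial>M)"
    using assms(3,4) by (intro nn_integral_cong) (force simp: indicator_def)
  finally show ?thesis ..
qed

lemma nn_integral_equimeasurable:
  fixes f :: "'a \<Rightarrow> real" and g :: "'b \<Rightarrow> real" and G :: "real \<Rightarrow> ennreal"
  assumes "f \<in> borel_measurable M" "g \<in> borel_measurable N" "G \<in> borel_measurable borel"
    and "G 0 = 0" and "\<And>x. x \<in> space M \<Longrightarrow> 0 \<le> f x" "\<And>y. y \<in> space N \<Longrightarrow> 0 \<le> g y"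
    and "equimeasurable M f N g"
    and "\<And>t. 0 < t \<Longrightarrow> emeasure M {x\<in>space M. t < f x} \<noteq> \<infinity>"
  shows "(\<integral>\<^sup>+x. G (f x) \<partial>M) = (\<integral>\<^sup>+y. G (g y) \<partial>N)"
  using assms by (simp add: nn_integral_log_distribution log_distribution_eq)

text \<open>
  The inner integral, as a function of the value at the outer point, is again of the form
  handled by the previous lemma.
\<close>

lemma nn_integral_pair_equimeasurable:
  fixes f :: "'a \<Rightarrow> real" and g :: "'b \<Rightarrow> real" and F :: "real \<Rightarrow> real \<Rightarrow> ennreal"
  assumes M: "sigma_finite_measure M" and N: "sigma_finite_measure N"
    and [measurable]: "f \<in> borel_measurable M" "g \<in> borel_measurable N"
      "(\<lambda>p. F (fst p) (snd p)) \<in> borel_measurable (borel \<Otimes>\<^sub>M borel)"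
    and F0: "\<And>a. 0 \<le> a \<Longrightarrow> F 0 a = 0" "\<And>a. 0 \<le> a \<Longrightarrow> F a 0 = 0"
    and f0: "\<And>x. x \<in> space M \<Longrightarrow> 0 \<le> f x" and g0: "\<And>y. y \<in> space N \<Longrightarrow> 0 \<le> g y"
    and eq: "equimeasurable M f N g"
    and fin: "\<And>t. 0 < t \<Longrightarrow> emeasure M {x\<in>space M. t < f x} \<noteq> \<infinity>"
  shows "(\<integral>\<^sup>+p. F (f (fst p)) (f (snd p)) \<partial>(M \<Otimes>\<^sub>M M)) =
         (\<integral>\<^sup>+p. F (g (fst p)) (g (snd p)) \<partial>(N \<Otimes>\<^sub>M N))"
proof -
  have [measurable]: "(\<lambda>x. F (u x) (v x)) \<in> borel_measurable K"
    if "u \<in> borel_measurable K" "v \<in> borel_measurable K" for u v and K :: "'c measure"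
    using measurable_compose[OF measurable_Pair[OF that] assms(5)] by simp
  define H where "H a = (\<integral>\<^sup>+y. F a (f y) \<partial>M)" for a
  have [measurable]: "H \<in> borel_measurable borel"
    unfolding H_def
    by (rule sigma_finite_measure.borel_measurable_nn_integral[OF M]) (simp add: split_beta')
  have "H 0 = 0"
    using F0 f0 by (simp add: H_def nn_integral_cong)
  have H_eq: "H a = (\<integral>\<^sup>+y. F a (g y) \<partial>N)" if "0 \<le> a" for a
    unfolding H_def using F0(2)[OF that] f0 g0 eq fin
    by (intro nn_integral_equimeasurable) auto
  have "(\<integral>\<^sup>+p. F (f (fst p)) (f (snd p)) \<partial>(M \<Otimes>\<^sub>M M)) = (\<integral>\<^sup>+x. H (f x) \<partial>M)"
    unfolding H_def by (subst sigma_finite_measure.nn_integral_fst[OF M, symmetric]) auto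
  also have "\<dots> = (\<integral>\<^sup>+y. H (g y) \<partial>N)"
    using \<open>H 0 = 0\<close> f0 g0 eq fin by (intro nn_integral_equimeasurable) auto
  also have "\<dots> = (\<integral>\<^sup>+p. F (g (fst p)) (g (snd p)) \<partial>(N \<Otimes>\<^sub>M N))"
    using g0 by (subst sigma_finite_measure.nn_integral_fst[OF N, symmetric])
      (auto simp: H_eq intro!: nn_integral_cong)
  finally show ?thesis .
qed

lemma integral_eq_of_nn_integral_eq:
  fixes f :: "'a \<Rightarrow> real" and g :: "'b \<Rightarrow> real"
  assumes "f \<in> borel_measurable M" "g \<in> borel_measurable N"
    and "\<And>x. x \<in> space M \<Longrightarrow> 0 \<le> f x" "\<And>y. y \<in> space N \<Longrightarrow> 0 \<le> g y"
    and "(\<integral>\<^sup>+x. ennreal (f x) \<partial>M) = (\<integral>\<^sup>+y. ennreal (g y) \<partial>N)"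
  shows "(\<integral>x. f x \<partial>M) = (\<integral>y. g y \<partial>N)"
  using assms by (simp add: integral_eq_nn_integral)

lemma integral_le_of_nn_integral_le:
  fixes f :: "'a \<Rightarrow> real" and g :: "'b \<Rightarrow> real"
  assumes "f \<in> borel_measurable M" "g \<in> borel_measurable N"
    and "\<And>x. x \<in> space M \<Longrightarrow> 0 \<le> f x" "\<And>y. y \<in> space N \<Longrightarrow> 0 \<le> g y"
    and "(\<integral>\<^sup>+x. ennreal (f x) \<partial>M) \<le> (\<integral>\<^sup>+y. ennreal (g y) \<partial>N)"
    and "(\<integral>\<^sup>+y. ennreal (g y) \<partial>N) \<noteq> \<infinity>"
  shows "(\<integral>x. f x \<partial>M) \<le> (\<integral>y. g y \<partial>N)"
  using assms by (simp add: integral_eq_nn_integral enn2real_mono less_top)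

lemma emeasure_level_set_finite_integrable:
  fixes f :: "'a \<Rightarrow> real"
  assumes "integrable M f" "0 < t"
  shows "emeasure M {x\<in>space M. t < \<bar>f x\<bar>} \<noteq> \<infinity>"
proof -
  have "emeasure M {x\<in>space M. t < \<bar>f x\<bar>} \<le> emeasure M {x\<in>space M. t \<le> \<bar>f x\<bar>}"
    using assms by (intro emeasure_mono) auto
  also have "\<dots> \<le> ennreal (1 / t * (\<integral>x. \<bar>f x\<bar> \<partial>M))"
    using assms by (intro integral_Markov_inequality) auto
  also have "\<dots> < \<infinity>"
    by simp
  finally show ?thesis
    by simp
qed

section \<open>The bathtub principle\<close>

lemma nn_integral_bathtub:
  fixes g :: "'a \<Rightarrow> ennreal"
  assumes [measurable]: "g \<in> borel_measurable M" "A \<in> sets M" "B \<in> sets M"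
    and AB: "emeasure M A = emeasure M B" and fin: "emeasure M B \<noteq> \<infinity>"
    and inside: "\<And>x. x \<in> B \<Longrightarrow> g x \<le> c" and outside: "\<And>x. x \<in> space M - B \<Longrightarrow> c \<le> g x"
  shows "(\<integral>\<^sup>+x. g x * indicator B x \<partial>M) \<le> (\<integral>\<^sup>+x. g x * indicator A x \<partial>M)"
proof -
  have split: "(\<integral>\<^sup>+x. g x * indicator S x \<partial>M) =
      (\<integral>\<^sup>+x. g x * indicator (S \<inter> T) x \<partial>M) + (\<integral>\<^sup>+x. g x * indicator (S - T) x \<partial>M)"
    if [measurable]: "S \<in> sets M" "T \<in> sets M" for S T
    by (subst nn_integral_add[symmetric]) (auto intro!: nn_integral_cong simp: indicator_def)
  have "emeasure M (A \<inter> B) \<le> emeasure M B"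
    by (rule emeasure_mono) auto
  then have fin_AB: "emeasure M (A \<inter> B) \<noteq> \<infinity>"
    using fin by (auto simp: top_unique)
  have diff: "emeasure M (S - T) = emeasure M S - emeasure M (S \<inter> T)"
    if "S \<in> sets M" "T \<in> sets M" "emeasure M (S \<inter> T) \<noteq> \<infinity>" for S T
  proof -
    have "S - T = S - (S \<inter> T)"
      by blast
    then show ?thesis
      using emeasure_Diff[OF that(3)] that by auto
  qed
  have diff_eq: "emeasure M (B - A) = emeasure M (A - B)"
    using diff[of B A] diff[of A B] AB fin_AB by (simp add: Int_commute)
  have "(\<integral>\<^sup>+x. g x * indicator (B - A) x \<partial>M) \<le> (\<integral>\<^sup>+x. c * indicator (B - A) x \<partial>M)"
    using inside by (intro nn_integral_mono) (auto simp: indicator_def)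
  also have "\<dots> = c * emeasure M (B - A)"
    by (rule nn_integral_cmult_indicator) auto
  also have "\<dots> = (\<integral>\<^sup>+x. c * indicator (A - B) x \<partial>M)"
    using diff_eq by (simp add: nn_integral_cmult_indicator)
  also have "\<dots> \<le> (\<integral>\<^sup>+x. g x * indicator (A - B) x \<partial>M)"
    using outside sets.sets_into_space[OF \<open>A \<in> sets M\<close>]
    by (intro nn_integral_mono) (auto simp: indicator_def)
  finally show ?thesis
    using split[of B A] split[of A B] by (simp add: Int_commute add_left_mono)
qed

section \<open>Symmetric decreasing rearrangement\<close>

lemma emeasure_ball_le_iff:
  fixes c :: "'a::euclidean_space"
  assumes "0 \<le> r" "0 \<le> s"
  shows "emeasure lborel (ball c r) \<le> emeasure lborel (ball c s) \<longleftrightarrow> r \<le> s"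
  using assms by (simp add: emeasure_ball)

lemma less_emeasure_downward_closed_iff:
  fixes S :: "real set"
  assumes "S \<in> sets borel" "S \<subseteq> {0<..}" "0 \<le> s"
    and down: "\<And>t u. t \<in> S \<Longrightarrow> 0 < u \<Longrightarrow> u \<le> t \<Longrightarrow> u \<in> S"
  shows "ennreal s < emeasure lborel S \<longleftrightarrow> (\<exists>t\<in>S. s < t)"
proof
  assume "\<exists>t\<in>S. s < t"
  then obtain t where "t \<in> S" "s < t"
    by blast
  then have "ennreal s < emeasure lborel {0<..t}"
    using \<open>0 \<le> s\<close> by (simp add: ennreal_less_iff)
  also have "\<dots> \<le> emeasure lborel S"
    using \<open>t \<in> S\<close> down \<open>S \<in> sets borel\<close> by (intro emeasure_mono) auto
  finally show "ennreal s < emeasure lborel S" .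
next
  assume "ennreal s < emeasure lborel S"
  show "\<exists>t\<in>S. s < t"
  proof (rule ccontr)
    assume "\<not> (\<exists>t\<in>S. s < t)"
    then have "S \<subseteq> {0<..s}"
      using \<open>S \<subseteq> {0<..}\<close> by force
    then have "emeasure lborel S \<le> ennreal s"
      using emeasure_mono[of S "{0<..s}" lborel] \<open>0 \<le> s\<close> by simp
    with \<open>ennreal s < emeasure lborel S\<close> show False
      by simp
  qed
qed

definition rearr_radius :: "R3 set \<Rightarrow> real" where
  "rearr_radius A = (SOME r. 0 \<le> r \<and> emeasure lborel (ball (0::R3) r) = emeasure lborel A)"

lemma rearr_radius:
  assumes "emeasure lborel A \<noteq> \<infinity>"
  shows "0 \<le> rearr_radius A" "emeasure lborel (ball (0::R3) (rearr_radius A)) = emeasure lborel A"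
proof -
  define r where "r = root 3 (enn2real (emeasure lborel A) / unit_ball_vol 3)"
  have "0 \<le> r \<and> emeasure lborel (ball (0::R3) r) = emeasure lborel A"
    using assms by (simp add: r_def emeasure_ball unit_ball_vol_3 ennreal_enn2real_if)
  then have "0 \<le> rearr_radius A \<and>
      emeasure lborel (ball (0::R3) (rearr_radius A)) = emeasure lborel A"
    unfolding rearr_radius_def by (rule someI[of _ r])
  then show "0 \<le> rearr_radius A"
    "emeasure lborel (ball (0::R3) (rearr_radius A)) = emeasure lborel A"
    by auto
qed

lemma sym_rearr_set_eq_ball:
  "emeasure lborel A \<noteq> \<infinity> \<Longrightarrow> sym_rearr_set A = ball 0 (rearr_radius A)"
  by (simp add: sym_rearr_set_def rearr_radius_def)

lemma rearr_radius_mono: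
  assumes "emeasure lborel A \<le> emeasure lborel B" "emeasure lborel B \<noteq> \<infinity>"
  shows "rearr_radius A \<le> rearr_radius B"
proof -
  have "emeasure lborel A \<noteq> \<infinity>"
    using assms by (auto simp: top_unique)
  then show ?thesis
    using assms rearr_radius[of A] rearr_radius[of B] emeasure_ball_le_iff[of _ _ "0::R3"] by metis
qed

lemma sym_dec_rearr_nonneg: "0 \<le> sym_dec_rearr f x"
  by (simp add: sym_dec_rearr_def)

definition level_radius :: "(R3 \<Rightarrow> real) \<Rightarrow> real \<Rightarrow> real" where
  "level_radius f t = rearr_radius {x. t < \<bar>f x\<bar>}"

text \<open>
  The heights \<open>t > 0\<close> whose rearranged level set contains \<open>x\<close>; the layer-cake definition
  of \<open>sym_dec_rearr\<close> makes \<open>sym_dec_rearr f x\<close> the length of this set.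
\<close>

definition rearr_levels :: "(R3 \<Rightarrow> real) \<Rightarrow> R3 \<Rightarrow> real set" where
  "rearr_levels f x = {t. 0 < t \<and> norm x < level_radius f t}"

context
  fixes f :: "R3 \<Rightarrow> real"
  assumes f_measurable [measurable]: "f \<in> borel_measurable lborel"
    and level_set_finite: "\<And>t. 0 < t \<Longrightarrow> emeasure lborel {x. t < \<bar>f x\<bar>} \<noteq> \<infinity>"
begin

lemma level_radius:
  assumes "0 < t"
  shows "0 \<le> level_radius f t"
    "emeasure lborel (ball (0::R3) (level_radius f t)) = emeasure lborel {x. t < \<bar>f x\<bar>}"
  using rearr_radius[OF level_set_finite[OF assms]] by (simp_all add: level_radius_def)

lemma sym_rearr_level_set:
  "0 < t \<Longrightarrow> sym_rearr_set {x. t < \<bar>f x\<bar>} = ball 0 (level_radius f t)"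
  unfolding level_radius_def by (rule sym_rearr_set_eq_ball[OF level_set_finite])

lemma level_radius_antimono:
  assumes "0 < s" "s \<le> t"
  shows "level_radius f t \<le> level_radius f s"
proof -
  have "emeasure lborel {x. t < \<bar>f x\<bar>} \<le> emeasure lborel {x. s < \<bar>f x\<bar>}"
    using assms by (intro emeasure_mono) auto
  then show ?thesis
    unfolding level_radius_def using level_set_finite[OF \<open>0 < s\<close>] by (rule rearr_radius_mono)
qed

lemma level_radius_measurable [measurable]:
  "(\<lambda>t. if 0 < t then level_radius f t else 0) \<in> borel_measurable borel"
proof -
  define g where "g t = - (if 0 < t then level_radius f t else 0)" for t
  have "g \<in> borel_measurable borel"
    unfolding g_def by (rule borel_measurable_piecewise_mono[where C="{{..0}, {0<..}}"])
      (auto simp: mono_on_def intro: level_radius_antimono)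
  then have "(\<lambda>t. - g t) \<in> borel_measurable borel"
    by (rule borel_measurable_uminus)
  then show ?thesis
    by (simp only: g_def minus_minus)
qed

lemma rearr_levels_sets [measurable]: "rearr_levels f x \<in> sets borel"
proof -
  have "rearr_levels f x = {t. 0 < t \<and> norm x < (if 0 < t then level_radius f t else 0)}"
    by (auto simp: rearr_levels_def)
  then show ?thesis
    by simp
qed

lemma sym_dec_rearr_eq:
  "sym_dec_rearr f x = enn2real (emeasure lborel (rearr_levels f x))"
proof -
  have "indicator {0<..} t * indicator (sym_rearr_set {y. t < \<bar>f y\<bar>}) x =
        (indicator (rearr_levels f x) t :: ennreal)" for t
    by (cases "0 < t") (simp_all add: sym_rearr_level_set rearr_levels_def indicator_def)
  then show ?thesis
    by (simp add: sym_dec_rearr_def)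
qed

lemma level_set_small:
  assumes "0 < e"
  shows "\<exists>t>0. emeasure lborel {x. t < \<bar>f x\<bar>} < e"
proof -
  define A where "A n = {x. real (Suc n) < \<bar>f x\<bar>}" for n
  have "decseq A"
    by (auto simp: A_def decseq_def)
  have "x \<notin> (\<Inter>n. A n)" for x
  proof -
    obtain n :: nat where "\<bar>f x\<bar> < real n"
      using reals_Archimedean2 by blast
    then show ?thesis
      by (auto simp: A_def intro!: exI[of _ n])
  qed
  then have "(\<Inter>n. A n) = {}"
    by blast
  with \<open>decseq A\<close> have "(INF n. emeasure lborel (A n)) = 0"
    using level_set_finite by (subst INF_emeasure_decseq) (auto simp: A_def)
  then have "(INF n. emeasure lborel (A n)) < e"
    using assms by simp
  then obtain n where "emeasure lborel (A n) < e"
    unfolding INF_less_iff by blast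
  then show ?thesis
    by (intro exI[of _ "real (Suc n)"]) (simp add: A_def)
qed

lemma rearr_levels_downward_closed:
  "t \<in> rearr_levels f x \<Longrightarrow> 0 < s \<Longrightarrow> s \<le> t \<Longrightarrow> s \<in> rearr_levels f x"
  using level_radius_antimono[of s t] by (auto simp: rearr_levels_def)

lemma less_emeasure_rearr_levels_iff_Bex:
  "0 \<le> s \<Longrightarrow>
    ennreal s < emeasure lborel (rearr_levels f x) \<longleftrightarrow> (\<exists>t\<in>rearr_levels f x. s < t)"
  by (rule less_emeasure_downward_closed_iff[OF rearr_levels_sets _ _ rearr_levels_downward_closed])
    (auto simp: rearr_levels_def)

lemma less_emeasure_rearr_levels_iff:
  assumes "0 < s"
  shows "ennreal s < emeasure lborel (rearr_levels f x) \<longleftrightarrow>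
         (\<exists>n. s + 1 / Suc n \<in> rearr_levels f x)"
proof -
  have "(\<exists>t\<in>rearr_levels f x. s < t) \<longleftrightarrow> (\<exists>n. s + 1 / Suc n \<in> rearr_levels f x)"
  proof
    assume "\<exists>t\<in>rearr_levels f x. s < t"
    then obtain t n where t: "t \<in> rearr_levels f x" and "inverse (Suc n) < t - s"
      using reals_Archimedean by (metis diff_gt_0_iff_gt)
    then have "s + 1 / Suc n \<in> rearr_levels f x"
      using assms
      by (intro rearr_levels_downward_closed[OF t]) (auto simp: inverse_eq_divide add_pos_pos)
    then show "\<exists>n. s + 1 / Suc n \<in> rearr_levels f x" ..
  next
    assume "\<exists>n. s + 1 / Suc n \<in> rearr_levels f x"
    then show "\<exists>t\<in>rearr_levels f x. s < t"
      by force
  qed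
  then show ?thesis
    using assms by (simp add: less_emeasure_rearr_levels_iff_Bex)
qed

lemma emeasure_rearr_levels_finite:
  assumes "x \<noteq> 0"
  shows "emeasure lborel (rearr_levels f x) \<noteq> \<infinity>"
proof -
  have "0 < emeasure lborel (ball (0::R3) (norm x))"
    using assms by (simp add: emeasure_ball unit_ball_vol_3)
  then obtain t where "0 < t"
    and "emeasure lborel {y. t < \<bar>f y\<bar>} < emeasure lborel (ball (0::R3) (norm x))"
    using level_set_small by blast
  then have "\<not> emeasure lborel (ball (0::R3) (norm x)) \<le>
      emeasure lborel (ball (0::R3) (level_radius f t))"
    using level_radius(2)[OF \<open>0 < t\<close>] by (simp add: not_le)
  then have "t \<notin> rearr_levels f x"
    using level_radius(1)[OF \<open>0 < t\<close>]
      emeasure_ball_le_iff[of "norm x" "level_radius f t" "0::R3"]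
    by (simp add: rearr_levels_def)
  then have "\<not> (\<exists>u\<in>rearr_levels f x. t < u)"
    using \<open>0 < t\<close> rearr_levels_downward_closed by force
  then have "emeasure lborel (rearr_levels f x) \<le> ennreal t"
    using \<open>0 < t\<close> by (simp add: less_emeasure_rearr_levels_iff_Bex[symmetric] not_less)
  then show ?thesis
    using ennreal_less_top[of t] by (auto simp: top_unique)
qed

lemma rearr_levels_measurable [measurable]:
  "Measurable.pred (lborel \<Otimes>\<^sub>M lborel) (\<lambda>p. snd p \<in> rearr_levels f (fst p))"
proof -
  have "Measurable.pred (lborel \<Otimes>\<^sub>M lborel)
          (\<lambda>p. 0 < snd p \<and> norm (fst p) < (if 0 < snd p then level_radius f (snd p) else 0))"
    by measurable
  then show ?thesis
    by (rule measurable_cong[THEN iffD1, rotated]) (simp add: rearr_levels_def)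
qed

lemma emeasure_rearr_levels_measurable [measurable]:
  "(\<lambda>x. emeasure lborel (rearr_levels f x)) \<in> borel_measurable lborel"
proof -
  have "(\<lambda>x. \<integral>\<^sup>+t. indicator (rearr_levels f x) t \<partial>lborel) \<in> borel_measurable lborel"
    by (rule lborel.borel_measurable_nn_integral) (simp add: split_beta' indicator_def)
  then show ?thesis
    by simp
qed

lemma sym_dec_rearr_measurable [measurable]: "sym_dec_rearr f \<in> borel_measurable lborel"
  by (simp add: sym_dec_rearr_eq[abs_def])

lemma emeasure_rearr_levels_superlevel:
  assumes "0 < s"
  shows "emeasure lborel {x. ennreal s < emeasure lborel (rearr_levels f x)} =
         emeasure lborel {x. s < \<bar>f x\<bar>}"
proof -
  define r where "r n = s + 1 / Suc n" for n
  have r_pos: "0 < r n" for n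
    using assms by (simp add: r_def add_pos_pos)
  have r_mono: "r n \<le> r m" if "m \<le> n" for m n
    using that by (simp add: r_def frac_le)
  have balls: "incseq (\<lambda>n. ball (0::R3) (level_radius f (r n)))"
    by (auto simp: incseq_def
        intro!: ball_subset_ball_iff[THEN iffD2] level_radius_antimono r_pos r_mono)
  have levels: "incseq (\<lambda>n. {x. r n < \<bar>f x\<bar>})"
    using r_mono by (auto simp: incseq_def intro: le_less_trans)
  have "(\<Union>n. {x. r n < \<bar>f x\<bar>}) = {x. s < \<bar>f x\<bar>}"
  proof (intro set_eqI iffI)
    fix x assume "x \<in> {x. s < \<bar>f x\<bar>}"
    then obtain n where "inverse (Suc n) < \<bar>f x\<bar> - s"
      using reals_Archimedean[of "\<bar>f x\<bar> - s"] by auto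
    then show "x \<in> (\<Union>n. {x. r n < \<bar>f x\<bar>})"
      by (intro UN_I[of n]) (auto simp: r_def inverse_eq_divide)
  qed (auto simp: r_def intro: less_trans[rotated])
  moreover have "{x. ennreal s < emeasure lborel (rearr_levels f x)} =
      (\<Union>n. ball 0 (level_radius f (r n)))"
    unfolding less_emeasure_rearr_levels_iff[OF assms]
    using r_pos by (auto simp: rearr_levels_def r_def)
  moreover have "emeasure lborel (\<Union>n. ball (0::R3) (level_radius f (r n))) =
                 emeasure lborel (\<Union>n. {x. r n < \<bar>f x\<bar>})"
    using level_radius(2)[OF r_pos] balls levels
    by (simp add: SUP_emeasure_incseq[symmetric] image_subset_iff)
  ultimately show ?thesis
    by simp
qed

lemma emeasure_sym_dec_rearr_superlevel:
  assumes "0 < s"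
  shows "emeasure lborel {x. s < sym_dec_rearr f x} = emeasure lborel {x. s < \<bar>f x\<bar>}"
proof -
  define E where "E = {x. ennreal s < emeasure lborel (rearr_levels f x)}"
  have null: "emeasure lborel (A \<union> {0}) = emeasure lborel A" if "A \<in> sets lborel" for A :: "R3 set"
    using that by (intro emeasure_Un_null_set) auto
  txt \<open>
    The origin is set aside because \<open>rearr_levels f 0\<close> may have infinite measure, in which
    case \<open>enn2real\<close> makes \<open>sym_dec_rearr f 0 = 0\<close>.
  \<close>
  have "s < sym_dec_rearr f x \<longleftrightarrow> x \<in> E" if "x \<noteq> 0" for x
    using emeasure_rearr_levels_finite[OF that] assms unfolding E_def
    by (cases "emeasure lborel (rearr_levels f x)")
      (simp_all add: sym_dec_rearr_eq ennreal_less_iff)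
  then have "{x. s < sym_dec_rearr f x} \<union> {0} = E \<union> {0}"
    by blast
  then have "emeasure lborel {x. s < sym_dec_rearr f x} = emeasure lborel E"
    using null[of "{x. s < sym_dec_rearr f x}"] null[of E] by (simp add: E_def)
  also have "\<dots> = emeasure lborel {x. s < \<bar>f x\<bar>}"
    unfolding E_def using assms by (rule emeasure_rearr_levels_superlevel)
  finally show ?thesis .
qed

lemma equimeasurable_sym_dec_rearr:
  "equimeasurable lborel (\<lambda>x. \<bar>f x\<bar>) lborel (sym_dec_rearr f)"
  by (simp add: equimeasurable_def emeasure_sym_dec_rearr_superlevel)

text \<open>
  Both sides are layer-cake integrals over the height \<open>t\<close>. At each height the rearranged
  level set is a centred ball of the same measure as \<open>{t < \<bar>f\<bar>}\<close>, and a radially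
  nondecreasing weight is at most its value on the sphere inside the ball and at least that
  value outside, so the bathtub principle compares the two slices.
\<close>

lemma nn_integral_radial_sym_dec_rearr_le:
  fixes h :: "real \<Rightarrow> real"
  assumes [measurable]: "h \<in> borel_measurable borel"
    and h_mono: "\<And>r s. 0 \<le> r \<Longrightarrow> r \<le> s \<Longrightarrow> h r \<le> h s"
  shows "(\<integral>\<^sup>+x. ennreal (h (norm x)) * ennreal (sym_dec_rearr f x) \<partial>lborel) \<le>
         (\<integral>\<^sup>+x. ennreal (h (norm x)) * ennreal \<bar>f x\<bar> \<partial>lborel)"
proof -
  define w where "w x = ennreal (h (norm x))" for x :: R3
  have [measurable]: "w \<in> borel_measurable lborel"
    unfolding w_def by measurable
  have fubini: "(\<integral>\<^sup>+x. \<integral>\<^sup>+t. w x * indicator (P x) t \<partial>lborel \<partial>lborel) =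
                (\<integral>\<^sup>+t. \<integral>\<^sup>+x. w x * indicator (P x) t \<partial>lborel \<partial>lborel)"
    if [measurable]: "Measurable.pred (lborel \<Otimes>\<^sub>M lborel) (\<lambda>p. snd p \<in> P (fst p))"
    for P :: "R3 \<Rightarrow> real set"
    by (rule lborel_pair.Fubini'[symmetric]) (simp add: indicator_def)
  have bathtub: "(\<integral>\<^sup>+x. w x * indicator (rearr_levels f x) t \<partial>lborel) \<le>
                 (\<integral>\<^sup>+x. w x * indicator {0<..<\<bar>f x\<bar>} t \<partial>lborel)" for t
  proof (cases "0 < t")
    case True
    then have "(\<integral>\<^sup>+x. w x * indicator (ball 0 (level_radius f t)) x \<partial>lborel) \<le>
               (\<integral>\<^sup>+x. w x * indicator {x. t < \<bar>f x\<bar>} x \<partial>lborel)"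
      using level_radius[OF True] level_set_finite[OF True]
      by (intro nn_integral_bathtub[where c="ennreal (h (level_radius f t))"])
        (auto simp: w_def intro!: ennreal_leI h_mono)
    with True show ?thesis
      by (simp add: rearr_levels_def indicator_def)
  qed (simp add: rearr_levels_def)
  have "(\<integral>\<^sup>+x. w x * ennreal (sym_dec_rearr f x) \<partial>lborel) \<le>
        (\<integral>\<^sup>+x. w x * emeasure lborel (rearr_levels f x) \<partial>lborel)"
    by (intro nn_integral_mono mult_left_mono) (auto simp: sym_dec_rearr_eq ennreal_enn2real_if)
  also have "\<dots> = (\<integral>\<^sup>+t. \<integral>\<^sup>+x. w x * indicator (rearr_levels f x) t \<partial>lborel \<partial>lborel)"
    by (simp add: fubini[symmetric] nn_integral_cmult)
  also have "\<dots> \<le> (\<integral>\<^sup>+t. \<integral>\<^sup>+x. w x * indicator {0<..<\<bar>f x\<bar>} t \<partial>lborel \<partial>lborel)"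
    by (intro nn_integral_mono bathtub)
  also have "\<dots> = (\<integral>\<^sup>+x. w x * ennreal \<bar>f x\<bar> \<partial>lborel)"
    by (simp add: fubini[symmetric] nn_integral_cmult)
  finally show ?thesis
    unfolding w_def .
qed

lemma integral_sym_dec_rearr_eq:
  fixes G :: "real \<Rightarrow> real"
  assumes [measurable]: "G \<in> borel_measurable borel"
    and "G 0 = 0" and G_nonneg: "\<And>u. 0 \<le> u \<Longrightarrow> 0 \<le> G u"
  shows "(\<integral>x. G (sym_dec_rearr f x) \<partial>lborel) = (\<integral>x. G \<bar>f x\<bar> \<partial>lborel)"
proof -
  have "(\<integral>\<^sup>+x. ennreal (G \<bar>f x\<bar>) \<partial>lborel) =
        (\<integral>\<^sup>+x. ennreal (G (sym_dec_rearr f x)) \<partial>lborel)"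
    using level_set_finite \<open>G 0 = 0\<close> sym_dec_rearr_measurable
    by (intro nn_integral_equimeasurable[OF _ _ _ _ _ _ equimeasurable_sym_dec_rearr])
      (auto simp: sym_dec_rearr_nonneg)
  then show ?thesis
    by (intro integral_eq_of_nn_integral_eq) (auto simp: sym_dec_rearr_nonneg intro: G_nonneg)
qed

lemma integral_pair_sym_dec_rearr_eq:
  fixes F :: "real \<Rightarrow> real \<Rightarrow> real"
  assumes F_measurable: "(\<lambda>p. F (fst p) (snd p)) \<in> borel_measurable (borel \<Otimes>\<^sub>M borel)"
    and F0: "\<And>a. 0 \<le> a \<Longrightarrow> F 0 a = 0" "\<And>a. 0 \<le> a \<Longrightarrow> F a 0 = 0"
    and F_nonneg: "\<And>a b. 0 \<le> a \<Longrightarrow> 0 \<le> b \<Longrightarrow> 0 \<le> F a b"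
  shows "(\<integral>p. F (sym_dec_rearr f (fst p)) (sym_dec_rearr f (snd p)) \<partial>(lborel \<Otimes>\<^sub>M lborel)) =
         (\<integral>p. F \<bar>f (fst p)\<bar> \<bar>f (snd p)\<bar> \<partial>(lborel \<Otimes>\<^sub>M lborel))"
proof -
  have [measurable]: "(\<lambda>x. F (u x) (v x)) \<in> borel_measurable K"
    if "u \<in> borel_measurable K" "v \<in> borel_measurable K" for u v and K :: "'c measure"
    using measurable_compose[OF measurable_Pair[OF that] F_measurable] by simp
  have "(\<integral>\<^sup>+p. ennreal (F \<bar>f (fst p)\<bar> \<bar>f (snd p)\<bar>) \<partial>(lborel \<Otimes>\<^sub>M lborel)) =
        (\<integral>\<^sup>+p. ennreal (F (sym_dec_rearr f (fst p)) (sym_dec_rearr f (snd p)))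
          \<partial>(lborel \<Otimes>\<^sub>M lborel))"
    using level_set_finite F0 sym_dec_rearr_measurable
    by (intro nn_integral_pair_equimeasurable[OF lborel.sigma_finite_measure_axioms
          lborel.sigma_finite_measure_axioms _ _ _ _ _ _ _ equimeasurable_sym_dec_rearr])
      (auto simp: sym_dec_rearr_nonneg)
  then show ?thesis
    by (intro integral_eq_of_nn_integral_eq) (auto simp: sym_dec_rearr_nonneg intro: F_nonneg)
qed

lemma integral_radial_sym_dec_rearr_le:
  fixes h :: "real \<Rightarrow> real"
  assumes [measurable]: "h \<in> borel_measurable borel"
    and h_mono: "\<And>r s. 0 \<le> r \<Longrightarrow> r \<le> s \<Longrightarrow> h r \<le> h s"
    and h_nonneg: "\<And>r. 0 \<le> r \<Longrightarrow> 0 \<le> h r"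
    and finite: "(\<integral>\<^sup>+x. ennreal (h (norm x) * \<bar>f x\<bar>) \<partial>lborel) \<noteq> \<infinity>"
  shows "(\<integral>x. h (norm x) * sym_dec_rearr f x \<partial>lborel) \<le> (\<integral>x. h (norm x) * \<bar>f x\<bar> \<partial>lborel)"
proof (rule integral_le_of_nn_integral_le)
  show "(\<integral>\<^sup>+x. ennreal (h (norm x) * sym_dec_rearr f x) \<partial>lborel) \<le>
        (\<integral>\<^sup>+x. ennreal (h (norm x) * \<bar>f x\<bar>) \<partial>lborel)"
    using nn_integral_radial_sym_dec_rearr_le[OF assms(1) h_mono]
    by (simp add: ennreal_mult'' sym_dec_rearr_nonneg)
qed (use finite in \<open>auto simp: sym_dec_rearr_nonneg intro!: mult_nonneg_nonneg h_nonneg\<close>)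

end

section \<open>The modified Thomas--Fermi functional\<close>

lemma J_class_nonneg: "\<tau> \<in> J_class \<Longrightarrow> 0 \<le> \<tau> x"
  by (simp add: J_class_def)

lemma J_class_integrable:
  assumes "\<tau> \<in> J_class"
  shows "integrable lborel \<tau>"
proof -
  have weighted: "integrable lborel (\<lambda>\<xi>. (1 + (norm \<xi>)\<^sup>2) * \<tau> \<xi>)"
    using assms by (simp add: J_class_def)
  have "(\<lambda>\<xi>. ((1 + (norm \<xi>)\<^sup>2) * \<tau> \<xi>) / (1 + (norm \<xi>)\<^sup>2)) \<in> borel_measurable lborel"
    using borel_measurable_integrable[OF weighted] by measurable
  moreover have "1 + (norm \<xi>)\<^sup>2 \<noteq> 0" for \<xi> :: R3
    using zero_le_power2[of "norm \<xi>"] by linarith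
  ultimately have "\<tau> \<in> borel_measurable lborel"
    by simp
  moreover have "\<tau> \<xi> \<le> (1 + (norm \<xi>)\<^sup>2) * \<tau> \<xi>" for \<xi>
    using J_class_nonneg[OF assms, of \<xi>] by (simp add: distrib_right)
  ultimately show ?thesis
    using J_class_nonneg[OF assms] by (intro Bochner_Integration.integrable_bound[OF weighted]) auto
qed

lemma nn_integral_kinetic_J_class_finite:
  assumes "\<tau> \<in> J_class"
  shows "(\<integral>\<^sup>+\<xi>. ennreal ((norm \<xi>)\<^sup>2 * \<tau> \<xi>) \<partial>lborel) \<noteq> \<infinity>"
proof -
  have weighted: "integrable lborel (\<lambda>\<xi>. (1 + (norm \<xi>)\<^sup>2) * \<tau> \<xi>)"
    using assms by (simp add: J_class_def)
  have "(\<integral>\<^sup>+\<xi>. ennreal ((norm \<xi>)\<^sup>2 * \<tau> \<xi>) \<partial>lborel) \<le>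
        (\<integral>\<^sup>+\<xi>. ennreal ((1 + (norm \<xi>)\<^sup>2) * \<tau> \<xi>) \<partial>lborel)"
    using J_class_nonneg[OF assms] by (intro nn_integral_mono ennreal_leI mult_right_mono) auto
  also have "\<dots> < \<infinity>"
    using weighted J_class_nonneg[OF assms] by (simp add: nn_integral_eq_integral)
  finally show ?thesis
    by simp
qed

definition mTF_pair :: "real \<Rightarrow> real \<Rightarrow> real" where
  "mTF_pair a b = min a b * max a b powr (2/3) - 1/5 * min a b powr (5/3)"

lemma mTF_pair_measurable:
  "(\<lambda>p. mTF_pair (fst p) (snd p)) \<in> borel_measurable (borel \<Otimes>\<^sub>M borel)"
  unfolding mTF_pair_def by measurable

lemma mTF_pair_zero: "0 \<le> a \<Longrightarrow> mTF_pair 0 a = 0" "0 \<le> a \<Longrightarrow> mTF_pair a 0 = 0"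
  by (simp_all add: mTF_pair_def)

lemma mTF_pair_nonneg:
  assumes "0 \<le> a" "0 \<le> b"
  shows "0 \<le> mTF_pair a b"
proof -
  define m M where "m = min a b" and "M = max a b"
  have "0 \<le> m" "m \<le> M"
    using assms by (auto simp: m_def M_def)
  then have "m powr (5/3) = m * m powr (2/3)"
    using powr_add[of m 1 "2/3"] by (cases "m = 0") simp_all
  moreover have "m * m powr (2/3) \<le> m * M powr (2/3)"
    using \<open>0 \<le> m\<close> \<open>m \<le> M\<close> by (intro mult_left_mono powr_mono2) auto
  moreover have "0 \<le> m * m powr (2/3)"
    using \<open>0 \<le> m\<close> by simp
  ultimately show ?thesis
    by (simp add: mTF_pair_def m_def[symmetric] M_def[symmetric])
qed

theorem lemma2:
  fixes q :: nat and Z :: real and \<tau> :: "R3 \<Rightarrow> real"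
  assumes "q > 0" and "Z > 0" and "\<tau> \<in> J_class"
  shows "E_mTF ((6 * pi\<^sup>2 / real q) powr (2/3)) Z (sym_dec_rearr \<tau>)
         \<le> E_mTF ((6 * pi\<^sup>2 / real q) powr (2/3)) Z \<tau>"
proof -
  have integrable: "integrable lborel \<tau>"
    using assms(3) by (rule J_class_integrable)
  then have measurable: "\<tau> \<in> borel_measurable lborel"
    by (rule borel_measurable_integrable)
  have level_finite: "emeasure lborel {x. t < \<bar>\<tau> x\<bar>} \<noteq> \<infinity>" if "0 < t" for t
    using emeasure_level_set_finite_integrable[OF integrable that] by simp
  have abs_\<tau>: "\<bar>\<tau> x\<bar> = \<tau> x" for x
    using J_class_nonneg[OF assms(3)] by simp
  have "(\<integral>\<xi>. sym_dec_rearr \<tau> \<xi> powr (2/3) \<partial>lborel) = (\<integral>\<xi>. \<tau> \<xi> powr (2/3) \<partial>lborel)"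
    using integral_sym_dec_rearr_eq[OF measurable level_finite, of "\<lambda>u. u powr (2/3)"]
    by (simp add: abs_\<tau>)
  moreover have
    "(\<integral>p. mTF_pair (sym_dec_rearr \<tau> (fst p)) (sym_dec_rearr \<tau> (snd p)) \<partial>(lborel \<Otimes>\<^sub>M lborel)) =
     (\<integral>p. mTF_pair (\<tau> (fst p)) (\<tau> (snd p)) \<partial>(lborel \<Otimes>\<^sub>M lborel))"
    using integral_pair_sym_dec_rearr_eq[OF measurable level_finite mTF_pair_measurable]
    by (simp add: abs_\<tau> mTF_pair_zero mTF_pair_nonneg)
  moreover have "(\<integral>\<xi>. (norm \<xi>)\<^sup>2 * sym_dec_rearr \<tau> \<xi> \<partial>lborel) \<le>
                 (\<integral>\<xi>. (norm \<xi>)\<^sup>2 * \<tau> \<xi> \<partial>lborel)"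
    using integral_radial_sym_dec_rearr_le[OF measurable level_finite, of "\<lambda>r. r\<^sup>2"]
      nn_integral_kinetic_J_class_finite[OF assms(3)]
    by (simp add: abs_\<tau> power_mono)
  ultimately show ?thesis
    by (simp add: E_mTF_def mTF_pair_def)
qed

end
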